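(* Let $G$ be a graph on $n$ vertices, $t\ge 1$ an integer, and let $G'$, $\alpha$ be as in the construction below; let $k=n+t+1$, $\ell=2t+2t^2$, and let $\beta$ be defined by $\beta(v)=\alpha(v)$ for $v\in V_G\cup V_C$ and $\beta(b^i_j)=n+j$ for $i,j\in\{1,\ldots,t\}$. If $G$ has an independent set of size at least $t-1$, then $\mathcal{C}_k(G')$ contains a path from $\alpha$ to $\beta$ of length at most $\ell$.
   Context: Construction: with $V(G)=\{v_1,\ldots,v_n\}$, $V(G')=V_G\cup V_B\cup V_C$, where $V_G=\{g_1,\ldots,g_n\}$ induces a copy of $G$ ($g_ig_j$ an edge iff $v_iv_j\in E(G)$); $V_B=\{b^i_j\mid i,j\in\{1,\ldots,t\}\}$ with $b^i_jb^{i'}_{j'}$ an edge iff $i\ne i'$ and $j\ne j'$; all edges between $V_G$ and $V_B$ are present; $V_C=C_1\cup\cdots\cup C_{n+t+1}$ with the $C_i$ pairwise disjoint independent sets of size $2t+2t^2$ and no edges among vertices of $V_C$; each $g_i$ is adjacent to all of $V_C\setminus(C_i\cup C_{n+t+1})$; each vertex of $V_B$ is adjacent to all of $C_{n+t+1}$; no other edges. $\alpha(g_i)=i$, $\alpha(c)=i$ for $c\in C_i$, $\alpha(b^i_j)=n+i$. A $k$-coloring is a map $V\to\{1,\ldots,k\}$ with adjacent vertices colored differently; $\mathcal{C}_k(G')$ is the graph on the $k$-colorings of $G'$, two adjacent iff they differ on exactly one vertex. *)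

theory Defs
  imports Main
begin

text \<open>Vertices of G': Gv i = g_i, Bv i j = b^i_j, Cv c m = the m-th vertex of C_c (m < 2t+2t^2).\<close>
datatype vert = Gv nat | Bv nat nat | Cv nat nat

definition simple_graph_on :: "nat \<Rightarrow> (nat \<Rightarrow> nat \<Rightarrow> bool) \<Rightarrow> bool" where
  "simple_graph_on n E \<longleftrightarrow>
     (\<forall>i\<in>{1..n}. \<forall>j\<in>{1..n}. E i j \<longleftrightarrow> E j i) \<and> (\<forall>i\<in>{1..n}. \<not> E i i)"

definition independent_set :: "nat \<Rightarrow> (nat \<Rightarrow> nat \<Rightarrow> bool) \<Rightarrow> nat set \<Rightarrow> bool" where
  "independent_set n E S \<longleftrightarrow> S \<subseteq> {1..n} \<and> (\<forall>i\<in>S. \<forall>j\<in>S. \<not> E i j)"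

definition Gp_verts :: "nat \<Rightarrow> nat \<Rightarrow> vert set" where
  "Gp_verts n t =
     {Gv i | i. i \<in> {1..n}} \<union>
     {Bv i j | i j. i \<in> {1..t} \<and> j \<in> {1..t}} \<union>
     {Cv c m | c m. c \<in> {1..n+t+1} \<and> m < 2*t + 2*t^2}"

fun Gp_edge0 :: "nat \<Rightarrow> nat \<Rightarrow> (nat \<Rightarrow> nat \<Rightarrow> bool) \<Rightarrow> vert \<Rightarrow> vert \<Rightarrow> bool" where
  "Gp_edge0 n t E (Gv i) (Gv j) = E i j"
| "Gp_edge0 n t E (Bv i j) (Bv i' j') = (i \<noteq> i' \<and> j \<noteq> j')"
| "Gp_edge0 n t E (Gv i) (Bv _ _) = True"
| "Gp_edge0 n t E (Gv i) (Cv c _) = (c \<noteq> i \<and> c \<noteq> n+t+1)"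
| "Gp_edge0 n t E (Bv _ _) (Cv c _) = (c = n+t+1)"
| "Gp_edge0 n t E _ _ = False"

definition Gp_adj :: "nat \<Rightarrow> nat \<Rightarrow> (nat \<Rightarrow> nat \<Rightarrow> bool) \<Rightarrow> vert \<Rightarrow> vert \<Rightarrow> bool" where
  "Gp_adj n t E u v \<longleftrightarrow>
     u \<in> Gp_verts n t \<and> v \<in> Gp_verts n t \<and> (Gp_edge0 n t E u v \<or> Gp_edge0 n t E v u)"

definition is_coloring :: "nat \<Rightarrow> nat \<Rightarrow> (nat \<Rightarrow> nat \<Rightarrow> bool) \<Rightarrow> nat \<Rightarrow> (vert \<Rightarrow> nat) \<Rightarrow> bool" where
  "is_coloring n t E k f \<longleftrightarrow>
     (\<forall>v\<in>Gp_verts n t. f v \<in> {1..k}) \<and> (\<forall>v. v \<notin> Gp_verts n t \<longrightarrow> f v = 0) \<and>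
     (\<forall>u v. Gp_adj n t E u v \<longrightarrow> f u \<noteq> f v)"

definition recol_adj :: "nat \<Rightarrow> nat \<Rightarrow> (nat \<Rightarrow> nat \<Rightarrow> bool) \<Rightarrow> nat \<Rightarrow> (vert \<Rightarrow> nat) \<Rightarrow> (vert \<Rightarrow> nat) \<Rightarrow> bool" where
  "recol_adj n t E k f g \<longleftrightarrow>
     is_coloring n t E k f \<and> is_coloring n t E k g \<and> card {v \<in> Gp_verts n t. f v \<noteq> g v} = 1"

text \<open>A path in C_k(G') given as its (distinct) vertex sequence; its length is length - 1.\<close>
definition recol_path :: "nat \<Rightarrow> nat \<Rightarrow> (nat \<Rightarrow> nat \<Rightarrow> bool) \<Rightarrow> nat \<Rightarrow> (vert \<Rightarrow> nat) list \<Rightarrow> bool" where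
  "recol_path n t E k fs \<longleftrightarrow> fs \<noteq> [] \<and> distinct fs \<and>
     (\<forall>f\<in>set fs. is_coloring n t E k f) \<and>
     (\<forall>i. Suc i < length fs \<longrightarrow> recol_adj n t E k (fs ! i) (fs ! Suc i))"

definition alpha_col :: "nat \<Rightarrow> nat \<Rightarrow> vert \<Rightarrow> nat" where
  "alpha_col n t v = (if v \<in> Gp_verts n t then
      (case v of Gv i \<Rightarrow> i | Bv i j \<Rightarrow> n + i | Cv c m \<Rightarrow> c) else 0)"

definition beta_col :: "nat \<Rightarrow> nat \<Rightarrow> vert \<Rightarrow> nat" where
  "beta_col n t v = (if v \<in> Gp_verts n t then
      (case v of Gv i \<Rightarrow> i | Bv i j \<Rightarrow> n + j | Cv c m \<Rightarrow> c) else 0)"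

end

theory Submission
  imports Defs
begin

text \<open>Let \<open>T = {\<sigma> 1, \<dots>, \<sigma> (t-1)}\<close> be independent in \<open>G\<close>.  The vertices \<open>g\<^bsub>\<sigma> i\<^esub>\<close> can then be
  moved one by one to the colour \<open>n+t+1\<close>, which \<open>\<alpha>\<close> uses only on \<open>C\<^bsub>n+t+1\<^esub>\<close>; this frees the
  colours \<open>\<sigma> i\<close> for \<open>V\<^sub>B\<close>.  On the grid \<open>V\<^sub>B\<close> a colouring is proper iff equal colours occur only
  within a row or within a column.  So the off-diagonal entries of each row \<open>i < t\<close> can be moved
  to \<open>\<sigma> i\<close>.  Afterwards, for \<open>j < t\<close>, the colour \<open>n + j\<close> survives only at \<open>b\<^sup>j\<^sub>j\<close>, so the
  off-diagonal entries of column \<open>j\<close> can be moved to \<open>n + j\<close>; then \<open>n + t\<close> survives only in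
  column \<open>t\<close>, whose other entries can be moved to \<open>n + t\<close> as well.  This turns the row colouring
  of \<open>\<alpha>\<close> on \<open>V\<^sub>B\<close> into the column colouring of \<open>\<beta>\<close>, and the vertices of \<open>T\<close> are finally moved
  back.  Each step recolours one vertex, there are at most \<open>2(t-1) + 2t(t-1) + (t-1) \<le> 2t + 2t\<^sup>2\<close>
  of them, and cutting out repetitions turns the walk into a path.\<close>

lemma relpowp_sym:
  assumes "symp R" and "(R ^^ N) x y"
  shows "(R ^^ N) y x"
  using assms(2)
proof (induction N arbitrary: y)
  case (Suc N y)
  then obtain z where "(R ^^ N) x z" "R z y" by (auto elim: relpowp_Suc_E)
  then show ?case using Suc.IH assms(1) by (meson relpowp_Suc_I2 sympD)
qed simp

lemma relpowp_imp_distinct_successively: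
  assumes "(R ^^ N) x y"
  shows "\<exists>xs. xs \<noteq> [] \<and> distinct xs \<and> successively R xs \<and> hd xs = x \<and> last xs = y \<and>
           length xs \<le> Suc N"
  using assms
proof (induction N arbitrary: y)
  case 0
  then show ?case by (intro exI[of _ "[x]"]) simp
next
  case (Suc N y)
  then obtain z where "(R ^^ N) x z" and zy: "R z y" by (auto elim: relpowp_Suc_E)
  then obtain xs where xs: "xs \<noteq> []" "distinct xs" "successively R xs" "hd xs = x" "last xs = z"
      "length xs \<le> Suc N"
    using Suc.IH by blast
  show ?case
  proof (cases "y \<in> set xs")
    case True
    then obtain i where i: "i < length xs" "xs ! i = y" by (auto simp: in_set_conv_nth)
    let ?ys = "take (Suc i) xs"
    have "successively R ?ys"
      using xs(3) successively_append_iff[of R ?ys "drop (Suc i) xs"] by simp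
    moreover have "last ?ys = y" using i by (metis last_snoc take_Suc_conv_app_nth)
    ultimately show ?thesis using xs i by (intro exI[of _ ?ys]) simp
  next
    case False
    then show ?thesis using xs zy by (intro exI[of _ "xs @ [y]"]) (simp add: successively_append_iff)
  qed
qed

lemma relpowp_card_of_insert_steps:
  assumes "finite Y" and "\<And>S x. S \<subseteq> Y \<Longrightarrow> x \<in> Y - S \<Longrightarrow> R (c S) (c (insert x S))"
  shows "(R ^^ card Y) (c {}) (c Y)"
proof -
  have "finite S \<Longrightarrow> S \<subseteq> Y \<Longrightarrow> (R ^^ card S) (c {}) (c S)" for S
    by (induction S rule: finite_induct) (auto intro: relpowp_Suc_I assms(2))
  then show ?thesis using assms(1) by blast
qed

definition recol_step :: "nat \<Rightarrow> nat \<Rightarrow> (nat \<Rightarrow> nat \<Rightarrow> bool) \<Rightarrow> nat \<Rightarrow> (vert \<Rightarrow> nat) \<Rightarrow> (vert \<Rightarrow> nat) \<Rightarrow> bool" where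
  "recol_step n t E k f g \<longleftrightarrow>
     is_coloring n t E k f \<and> is_coloring n t E k g \<and> (\<exists>w. \<forall>v. v \<noteq> w \<longrightarrow> f v = g v)"

lemma symp_recol_step: "symp (recol_step n t E k)"
  unfolding symp_def recol_step_def by metis

lemma recol_adj_if_recol_step:
  assumes "recol_step n t E k f g" and "f \<noteq> g"
  shows "recol_adj n t E k f g"
proof -
  obtain w where w: "\<And>v. v \<noteq> w \<Longrightarrow> f v = g v" using assms(1) by (auto simp: recol_step_def)
  have "f w \<noteq> g w" using assms(2) w by (metis ext)
  moreover have "w \<in> Gp_verts n t"
    using calculation assms(1) by (metis is_coloring_def recol_step_def)
  ultimately have "{v \<in> Gp_verts n t. f v \<noteq> g v} = {w}" using w by auto
  then show ?thesis using assms(1) by (simp add: recol_adj_def recol_step_def)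
qed

lemma recol_path_if_relpowp:
  assumes "(recol_step n t E k ^^ N) f g" and "is_coloring n t E k f"
  shows "\<exists>fs. recol_path n t E k fs \<and> hd fs = f \<and> last fs = g \<and> length fs \<le> Suc N"
proof -
  obtain fs where fs: "fs \<noteq> []" "distinct fs" "successively (recol_step n t E k) fs"
      "hd fs = f" "last fs = g" "length fs \<le> Suc N"
    using relpowp_imp_distinct_successively[OF assms(1)] by blast
  have step: "recol_step n t E k (fs ! i) (fs ! Suc i)" if "Suc i < length fs" for i
    using fs(3) that by (rule successively_nth)
  have "is_coloring n t E k (fs ! i)" if "i < length fs" for i
  proof (cases i)
    case 0
    then show ?thesis using assms(2) fs(1,4) by (simp add: hd_conv_nth)
  next
    case (Suc j)
    then show ?thesis using step[of j] that by (simp add: recol_step_def)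
  qed
  moreover have "recol_adj n t E k (fs ! i) (fs ! Suc i)" if "Suc i < length fs" for i
    using recol_adj_if_recol_step[OF step[OF that]] fs(2) that by (simp add: nth_eq_iff_index_eq)
  ultimately have "recol_path n t E k fs" using fs(1,2) by (auto simp: recol_path_def in_set_conv_nth)
  then show ?thesis using fs by blast
qed

lemma Gp_verts_iff [simp]:
  "Gv i \<in> Gp_verts n t \<longleftrightarrow> i \<in> {1..n}"
  "Bv i j \<in> Gp_verts n t \<longleftrightarrow> i \<in> {1..t} \<and> j \<in> {1..t}"
  "Cv c m \<in> Gp_verts n t \<longleftrightarrow> c \<in> {1..n+t+1} \<and> m < 2*t + 2*t^2"
  by (auto simp: Gp_verts_def)

lemma independent_set_subset: "independent_set n E T \<Longrightarrow> S \<subseteq> T \<Longrightarrow> independent_set n E S"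
  unfolding independent_set_def by blast

definition gb_col :: "nat \<Rightarrow> nat \<Rightarrow> nat set \<Rightarrow> (nat \<times> nat \<Rightarrow> nat) \<Rightarrow> vert \<Rightarrow> nat" where
  "gb_col n t S b v = (if v \<in> Gp_verts n t then
     (case v of Gv i \<Rightarrow> if i \<in> S then n+t+1 else i | Bv i j \<Rightarrow> b (i, j) | Cv c m \<Rightarrow> c) else 0)"

definition B_admissible :: "nat \<Rightarrow> nat \<Rightarrow> nat set \<Rightarrow> (nat \<times> nat \<Rightarrow> nat) \<Rightarrow> bool" where
  "B_admissible n t S b \<longleftrightarrow>
     (\<forall>p \<in> {1..t} \<times> {1..t}. b p \<in> {n<..n+t} \<union> S) \<and>
     (\<forall>p \<in> {1..t} \<times> {1..t}. \<forall>q \<in> {1..t} \<times> {1..t}. fst p \<noteq> fst q \<longrightarrow> snd p \<noteq> snd q \<longrightarrow> b p \<noteq> b q)"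

lemma alpha_col_eq_gb_col: "alpha_col n t = gb_col n t {} (\<lambda>p. n + fst p)"
  by (rule ext) (auto simp: gb_col_def alpha_col_def split: vert.split)

lemma beta_col_eq_gb_col: "beta_col n t = gb_col n t {} (\<lambda>p. n + snd p)"
  by (rule ext) (auto simp: gb_col_def beta_col_def split: vert.split)

lemma gb_col_cong:
  "(\<And>p. p \<in> {1..t} \<times> {1..t} \<Longrightarrow> b p = b' p) \<Longrightarrow> gb_col n t S b = gb_col n t S b'"
  by (rule ext) (auto simp: gb_col_def split: vert.split)

lemma is_coloring_gb_col:
  assumes sg: "simple_graph_on n E" and ind: "independent_set n E S" and adm: "B_admissible n t S b"
  shows "is_coloring n t E (n+t+1) (gb_col n t S b)"
proof -
  have S: "S \<subseteq> {1..n}" using ind by (simp add: independent_set_def)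
  have B_range: "n < b (i, j) \<and> b (i, j) \<le> n+t \<or> b (i, j) \<in> S" if "i \<in> {1..t}" "j \<in> {1..t}" for i j
    using adm that by (auto simp: B_admissible_def)
  have B_proper: "b (i, j) \<noteq> b (i', j')"
    if "i \<in> {1..t}" "j \<in> {1..t}" "i' \<in> {1..t}" "j' \<in> {1..t}" "i \<noteq> i'" "j \<noteq> j'" for i j i' j'
    using adm that unfolding B_admissible_def by fastforce
  have G_proper: "i \<noteq> j \<and> \<not> (i \<in> S \<and> j \<in> S)" if "i \<in> {1..n}" "j \<in> {1..n}" "E i j \<or> E j i" for i j
    using sg ind that unfolding simple_graph_on_def independent_set_def by blast
  have B_colour: "b (i, j) \<in> {1..n+t}" if "i \<in> {1..t}" "j \<in> {1..t}" for i j
    using B_range[OF that] S by auto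
  have edge: "gb_col n t S b u \<noteq> gb_col n t S b v"
    if "Gp_edge0 n t E u v" "u \<in> Gp_verts n t" "v \<in> Gp_verts n t" for u v
  proof (cases u; cases v)
    fix i j assume "u = Gv i" "v = Gv j"
    then show ?thesis using that G_proper[of i j] by (auto simp: gb_col_def)
  next
    fix i i' j' assume "u = Gv i" "v = Bv i' j'"
    then show ?thesis using that S B_range[of i' j'] B_colour[of i' j'] by (auto simp: gb_col_def)
  next
    fix i' j' i j assume "u = Bv i' j'" "v = Bv i j"
    then show ?thesis using that B_proper[of i' j' i j] by (auto simp: gb_col_def)
  next
    fix i' j' c m assume "u = Bv i' j'" "v = Cv c m"
    then show ?thesis using that B_colour[of i' j'] by (auto simp: gb_col_def)
  qed (use that in \<open>auto simp: gb_col_def\<close>)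
  have "gb_col n t S b u \<noteq> gb_col n t S b v" if "Gp_adj n t E u v" for u v
    using that edge[of u v] edge[of v u] by (auto simp: Gp_adj_def)
  moreover have "gb_col n t S b v \<in> {1..n+t+1}" if "v \<in> Gp_verts n t" for v
  proof (cases v)
    case (Bv i j)
    then show ?thesis using that B_colour[of i j] by (simp add: gb_col_def)
  qed (use that in \<open>auto simp: gb_col_def\<close>)
  ultimately show ?thesis by (simp add: is_coloring_def gb_col_def)
qed

text \<open>Conditions under which the entries of \<open>b\<close> in \<open>Y\<close> may be switched to the values of \<open>b'\<close>
  one at a time, in any order, keeping every intermediate B-colouring admissible.\<close>
definition B_recolourable ::
    "nat \<Rightarrow> nat \<Rightarrow> nat set \<Rightarrow> (nat \<times> nat \<Rightarrow> nat) \<Rightarrow> (nat \<times> nat \<Rightarrow> nat) \<Rightarrow> (nat \<times> nat) set \<Rightarrow> bool" where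
  "B_recolourable n t S b b' Y \<longleftrightarrow> B_admissible n t S b \<and>
     (\<forall>p\<in>Y. b' p \<in> {n<..n+t} \<union> S) \<and>
     (\<forall>p\<in>Y. \<forall>q\<in>Y. fst p \<noteq> fst q \<longrightarrow> snd p \<noteq> snd q \<longrightarrow> b' p \<noteq> b' q) \<and>
     (\<forall>p\<in>Y. \<forall>q\<in>{1..t} \<times> {1..t}. fst p \<noteq> fst q \<longrightarrow> snd p \<noteq> snd q \<longrightarrow> b' p \<noteq> b q)"

lemma B_admissible_override_on:
  assumes "B_recolourable n t S b b' Y" and "Y' \<subseteq> Y"
  shows "B_admissible n t S (override_on b b' Y')"
proof (unfold B_admissible_def, intro conjI ballI impI)
  fix p assume "p \<in> {1..t} \<times> {1..t}"
  then show "override_on b b' Y' p \<in> {n<..n+t} \<union> S"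
    using assms by (auto simp: B_recolourable_def B_admissible_def override_on_def)
next
  fix p q assume pq: "p \<in> {1..t} \<times> {1..t}" "q \<in> {1..t} \<times> {1..t}" "fst p \<noteq> fst q" "snd p \<noteq> snd q"
  have "b p \<noteq> b q" using assms(1) pq unfolding B_recolourable_def B_admissible_def by blast
  moreover have "b' p \<noteq> b' q" if "p \<in> Y" "q \<in> Y"
    using assms(1) pq that unfolding B_recolourable_def by blast
  moreover have "b' p \<noteq> b q" if "p \<in> Y" using assms(1) pq that unfolding B_recolourable_def by blast
  moreover have "b' q \<noteq> b p" if "q \<in> Y"
    using assms(1) pq that unfolding B_recolourable_def by (metis (full_types))
  ultimately show "override_on b b' Y' p \<noteq> override_on b b' Y' q"
    using assms(2) by (auto simp: override_on_def)
qed

lemma raise_G_walk: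
  assumes sg: "simple_graph_on n E" and ind: "independent_set n E T"
    and adm: "\<And>S. B_admissible n t S b"
  shows "(recol_step n t E (n+t+1) ^^ card T) (gb_col n t {} b) (gb_col n t T b)"
proof (rule relpowp_card_of_insert_steps)
  show "finite T" using ind finite_subset by (auto simp: independent_set_def)
  fix S x assume "S \<subseteq> T" "x \<in> T - S"
  then have "independent_set n E S" "independent_set n E (insert x S)"
    using ind independent_set_subset by auto
  then show "recol_step n t E (n+t+1) (gb_col n t S b) (gb_col n t (insert x S) b)"
    using is_coloring_gb_col[OF sg _ adm] unfolding recol_step_def
    by (auto intro!: exI[of _ "Gv x"] simp: gb_col_def split: vert.split)
qed

lemma override_B_walk:
  assumes sg: "simple_graph_on n E" and ind: "independent_set n E S" and "finite Y"
    and rec: "B_recolourable n t S b b' Y"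
  shows "(recol_step n t E (n+t+1) ^^ card Y) (gb_col n t S b) (gb_col n t S (override_on b b' Y))"
proof -
  have "recol_step n t E (n+t+1) (gb_col n t S (override_on b b' Y'))
      (gb_col n t S (override_on b b' (insert p Y')))"
    if "Y' \<subseteq> Y" "p \<in> Y - Y'" for Y' p
  proof -
    have "\<forall>v. v \<noteq> Bv (fst p) (snd p) \<longrightarrow>
        gb_col n t S (override_on b b' Y') v = gb_col n t S (override_on b b' (insert p Y')) v"
      using that by (auto simp: gb_col_def override_on_def split: vert.split)
    then show ?thesis
      using is_coloring_gb_col[OF sg ind B_admissible_override_on[OF rec]] that
      unfolding recol_step_def by blast
  qed
  then show ?thesis
    using relpowp_card_of_insert_steps[OF \<open>finite Y\<close>, of _ "\<lambda>Y'. gb_col n t S (override_on b b' Y')"]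
    by simp
qed

definition off_diagonal_rows :: "nat \<Rightarrow> (nat \<times> nat) set" where
  "off_diagonal_rows t = {p \<in> {1..<t} \<times> {1..t}. fst p \<noteq> snd p}"

definition off_diagonal_columns :: "nat \<Rightarrow> (nat \<times> nat) set" where
  "off_diagonal_columns t = {p \<in> {1..t} \<times> {1..<t}. fst p \<noteq> snd p}"

definition B_phase1 :: "nat \<Rightarrow> nat \<Rightarrow> (nat \<Rightarrow> nat) \<Rightarrow> nat \<times> nat \<Rightarrow> nat" where
  "B_phase1 n t \<sigma> = override_on (\<lambda>p. n + fst p) (\<sigma> \<circ> fst) (off_diagonal_rows t)"

definition B_phase2 :: "nat \<Rightarrow> nat \<Rightarrow> (nat \<Rightarrow> nat) \<Rightarrow> nat \<times> nat \<Rightarrow> nat" where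
  "B_phase2 n t \<sigma> = override_on (B_phase1 n t \<sigma>) (\<lambda>p. n + snd p) (off_diagonal_columns t)"

lemma B_recolourable_phase1:
  assumes "independent_set n E T" "inj_on \<sigma> {1..<t}" "\<sigma> ` {1..<t} \<subseteq> T"
  shows "B_recolourable n t T (\<lambda>p. n + fst p) (\<sigma> \<circ> fst) (off_diagonal_rows t)"
proof -
  have "\<sigma> i \<in> T \<and> \<sigma> i \<le> n" if "i \<in> {1..<t}" for i
    using assms(1,3) that unfolding independent_set_def by force
  then show ?thesis using assms(2)
    by (fastforce simp: B_recolourable_def B_admissible_def off_diagonal_rows_def dest: inj_onD)
qed

lemma B_recolourable_phase2:
  assumes "independent_set n E T" "inj_on \<sigma> {1..<t}" "\<sigma> ` {1..<t} \<subseteq> T"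
  shows "B_recolourable n t T (B_phase1 n t \<sigma>) (\<lambda>p. n + snd p) (off_diagonal_columns t)"
proof -
  have "B_phase1 n t \<sigma> q \<noteq> n + j"
    if "q \<in> {1..t} \<times> {1..t}" "j \<in> {1..<t}" "snd q \<noteq> j" for q j
  proof (cases "q \<in> off_diagonal_rows t")
    case True
    then have "\<sigma> (fst q) \<le> n"
      using assms(1,3) unfolding independent_set_def off_diagonal_rows_def by force
    then show ?thesis using True that by (simp add: B_phase1_def)
  next
    case False
    then have "fst q = t \<or> fst q = snd q" using that by (auto simp: off_diagonal_rows_def)
    then show ?thesis using False that by (auto simp: B_phase1_def)
  qed
  moreover have "B_admissible n t T (B_phase1 n t \<sigma>)"
    unfolding B_phase1_def using B_admissible_override_on[OF B_recolourable_phase1[OF assms]] by blast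
  ultimately show ?thesis by (fastforce simp: B_recolourable_def off_diagonal_columns_def)
qed

lemma B_recolourable_phase3:
  assumes "independent_set n E T" "inj_on \<sigma> {1..<t}" "\<sigma> ` {1..<t} \<subseteq> T"
  shows "B_recolourable n t T (B_phase2 n t \<sigma>) (\<lambda>p. n + snd p) ({1..<t} \<times> {t})"
proof -
  have "B_phase2 n t \<sigma> q = n + snd q" if "q \<in> {1..t} \<times> {1..<t}" for q
    using that by (cases "fst q = snd q")
      (auto simp: B_phase2_def B_phase1_def off_diagonal_rows_def off_diagonal_columns_def)
  moreover have "B_admissible n t T (B_phase2 n t \<sigma>)"
    unfolding B_phase2_def using B_admissible_override_on[OF B_recolourable_phase2[OF assms]] by blast
  ultimately show ?thesis by (fastforce simp: B_recolourable_def)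
qed

lemma rows_to_columns_walk:
  assumes sg: "simple_graph_on n E" and ind: "independent_set n E T"
    and \<sigma>: "inj_on \<sigma> {1..<t}" "\<sigma> ` {1..<t} \<subseteq> T"
  shows "\<exists>N \<le> 2*t*(t-1) + (t-1). (recol_step n t E (n+t+1) ^^ N)
           (gb_col n t T (\<lambda>p. n + fst p)) (gb_col n t T (\<lambda>p. n + snd p))"
proof -
  let ?Y1 = "off_diagonal_rows t" and ?Y2 = "off_diagonal_columns t" and ?Y3 = "{1..<t} \<times> {t}"
  have fin: "finite ?Y1" "finite ?Y2" "finite ?Y3"
    by (auto simp: off_diagonal_rows_def off_diagonal_columns_def)
  have "gb_col n t T (override_on (B_phase2 n t \<sigma>) (\<lambda>p. n + snd p) ?Y3) = gb_col n t T (\<lambda>p. n + snd p)"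
    by (rule gb_col_cong) (auto simp: B_phase2_def B_phase1_def off_diagonal_rows_def
        off_diagonal_columns_def override_on_def)
  then have "(recol_step n t E (n+t+1) ^^ (card ?Y1 + card ?Y2 + card ?Y3))
      (gb_col n t T (\<lambda>p. n + fst p)) (gb_col n t T (\<lambda>p. n + snd p))"
    using override_B_walk[OF sg ind fin(1) B_recolourable_phase1[OF ind \<sigma>]]
      override_B_walk[OF sg ind fin(2) B_recolourable_phase2[OF ind \<sigma>]]
      override_B_walk[OF sg ind fin(3) B_recolourable_phase3[OF ind \<sigma>]]
    unfolding relpowp_add B_phase1_def[symmetric] B_phase2_def[symmetric] by auto
  moreover have "card ?Y1 \<le> (t-1) * t"
    using card_mono[of "{1..<t} \<times> {1..t}" ?Y1] by (auto simp: off_diagonal_rows_def card_cartesian_product)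
  moreover have "card ?Y2 \<le> t * (t-1)"
    using card_mono[of "{1..t} \<times> {1..<t}" ?Y2]
    by (auto simp: off_diagonal_columns_def card_cartesian_product)
  moreover have "card ?Y3 = t - 1" by (simp add: card_cartesian_product)
  ultimately show ?thesis
    by (intro exI[of _ "card ?Y1 + card ?Y2 + card ?Y3"]) (auto simp: algebra_simps)
qed

lemma B_admissible_rows: "B_admissible n t S (\<lambda>p. n + fst p)"
  and B_admissible_columns: "B_admissible n t S (\<lambda>p. n + snd p)"
  by (auto simp: B_admissible_def)

lemma is_coloring_alpha_col:
  "simple_graph_on n E \<Longrightarrow> is_coloring n t E (n+t+1) (alpha_col n t)"
  unfolding alpha_col_eq_gb_col
  by (rule is_coloring_gb_col) (auto simp: independent_set_def B_admissible_rows)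

lemma alpha_beta_walk:
  assumes sg: "simple_graph_on n E" and ind: "independent_set n E T"
    and "inj_on \<sigma> {1..<t}" "\<sigma> ` {1..<t} \<subseteq> T"
  shows "\<exists>N \<le> 2 * card T + 2*t*(t-1) + (t-1).
           (recol_step n t E (n+t+1) ^^ N) (alpha_col n t) (beta_col n t)"
proof -
  let ?R = "recol_step n t E (n+t+1)"
  obtain N where N: "N \<le> 2*t*(t-1) + (t-1)"
      "(?R ^^ N) (gb_col n t T (\<lambda>p. n + fst p)) (gb_col n t T (\<lambda>p. n + snd p))"
    using rows_to_columns_walk[OF sg ind assms(3,4)] by blast
  have "(?R ^^ (card T + N + card T)) (gb_col n t {} (\<lambda>p. n + fst p)) (gb_col n t {} (\<lambda>p. n + snd p))"
    using raise_G_walk[OF sg ind B_admissible_rows] N(2)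
      relpowp_sym[OF symp_recol_step raise_G_walk[OF sg ind B_admissible_columns]]
    unfolding relpowp_add by blast
  then show ?thesis
    using N(1) by (intro exI[of _ "card T + N + card T"]) (simp add: alpha_col_eq_gb_col beta_col_eq_gb_col)
qed

theorem mainTheorem3:
  fixes n t :: nat and E :: "nat \<Rightarrow> nat \<Rightarrow> bool"
  assumes "simple_graph_on n E"
    and "t \<ge> 1"
    and "\<exists>S. independent_set n E S \<and> card S \<ge> t - 1"
  shows "\<exists>fs. recol_path n t E (n + t + 1) fs \<and>
           hd fs = alpha_col n t \<and> last fs = beta_col n t \<and>
           length fs - 1 \<le> 2*t + 2*t^2"
proof -
  obtain S where S: "independent_set n E S" "t - 1 \<le> card S" using assms(3) by blast
  then obtain T where "T \<subseteq> S" "card T = t - 1" by (meson obtain_subset_with_card_n)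
  then have ind: "independent_set n E T" using S(1) independent_set_subset by blast
  then have "finite T" by (auto simp: independent_set_def intro: finite_subset)
  have "{1..card T} = {1..<t}" using \<open>card T = t - 1\<close> assms(2) by auto
  then obtain \<sigma> where "bij_betw \<sigma> {1..<t} T"
    using ex_bij_betw_nat_finite_1[OF \<open>finite T\<close>] by auto
  then obtain N where N: "N \<le> 2 * card T + 2*t*(t-1) + (t-1)"
      "(recol_step n t E (n+t+1) ^^ N) (alpha_col n t) (beta_col n t)"
    using alpha_beta_walk[OF assms(1) ind] by (auto simp: bij_betw_def)
  then obtain fs where "recol_path n t E (n+t+1) fs" "hd fs = alpha_col n t"
      "last fs = beta_col n t" "length fs \<le> Suc N"
    using recol_path_if_relpowp is_coloring_alpha_col[OF assms(1)] by blast
  moreover have "N \<le> 2*t + 2*t^2"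
    using N(1) \<open>card T = t - 1\<close> assms(2) by (cases t) (simp_all add: power2_eq_square)
  ultimately show ?thesis by fastforce
qed

end
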